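(* Let $\mathcal V\subseteq B(H)$ be an operator system and let $p\in\mathcal V$ be a projection in $B(H)$. Then $(\mathcal V/J_p,\{\widetilde C(p_n)\}_n,p+J_p)$ is an operator system.
   Context: $p_n=I_n\otimes p$; $C(p_n)=\{x\in M_n(\mathcal V): x=x^*,\ p_nxp_n\ge 0\text{ in } B(H^n)\}$; $J_p=\operatorname{span}(C(p)\cap-C(p))$; $\widetilde C(p_n)=\{(x_{ij}+J_p)\in M_n(\mathcal V/J_p):(x_{ij})\in C(p_n)\}$. An operator system is a $*$-vector space with a proper matrix ordering (cones $D_n\subseteq M_n(\cdot)_h$, $\alpha^*D_n\alpha\subseteq D_m$, $D_n\cap-D_n=\{0\}$) and an Archimedean matrix order unit. *)

theory Defs
  imports Complex_Main
begin

class complex_hilbert = ab_group_add +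
  fixes scaleC :: "complex \<Rightarrow> 'a \<Rightarrow> 'a"
    and cinner :: "'a \<Rightarrow> 'a \<Rightarrow> complex"
  assumes scaleC_add_right: "scaleC a (x + y) = scaleC a x + scaleC a y"
    and scaleC_add_left: "scaleC (a + b) x = scaleC a x + scaleC b x"
    and scaleC_scaleC: "scaleC a (scaleC b x) = scaleC (a * b) x"
    and scaleC_one: "scaleC 1 x = x"
    and cinner_add_left: "cinner (x + y) z = cinner x z + cinner y z"
    and cinner_scaleC_left: "cinner (scaleC a x) y = a * cinner x y"
    and cinner_commute: "cinner y x = cnj (cinner x y)"
    and cinner_ge_zero: "Im (cinner x x) = 0 \<and> Re (cinner x x) \<ge> 0"
    and cinner_eq_zero: "cinner x x = 0 \<longleftrightarrow> x = 0"
    and complete: "(\<forall>e::real>0. \<exists>N::nat. \<forall>m\<ge>N. \<forall>n\<ge>N.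
                       sqrt (Re (cinner (X m - X n) (X m - X n))) < e)
                   \<Longrightarrow> \<exists>L. \<forall>e::real>0. \<exists>N::nat. \<forall>n\<ge>N.
                       sqrt (Re (cinner (X n - L) (X n - L))) < e"
    \<comment> \<open>inner product linear in the first, conjugate-linear in the second argument\<close>

definition hnorm :: "'h::complex_hilbert \<Rightarrow> real" where
  "hnorm x = sqrt (Re (cinner x x))"

definition clinear_op :: "('h::complex_hilbert \<Rightarrow> 'h) \<Rightarrow> bool" where
  "clinear_op T \<longleftrightarrow> (\<forall>x y. T (x + y) = T x + T y) \<and> (\<forall>a x. T (scaleC a x) = scaleC a (T x))"

definition BH :: "('h::complex_hilbert \<Rightarrow> 'h) set" where
  "BH = {T. clinear_op T \<and> (\<exists>K. \<forall>x. hnorm (T x) \<le> K * hnorm x)}"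

definition adj :: "('h::complex_hilbert \<Rightarrow> 'h) \<Rightarrow> ('h \<Rightarrow> 'h)" where
  "adj T = (SOME S. \<forall>x y. cinner (T x) y = cinner x (S y))"

definition op_add :: "('h::complex_hilbert \<Rightarrow> 'h) \<Rightarrow> ('h \<Rightarrow> 'h) \<Rightarrow> ('h \<Rightarrow> 'h)" where
  "op_add S T = (\<lambda>x. S x + T x)"

definition op_scale :: "complex \<Rightarrow> ('h::complex_hilbert \<Rightarrow> 'h) \<Rightarrow> ('h \<Rightarrow> 'h)" where
  "op_scale c T = (\<lambda>x. scaleC c (T x))"

definition op_zero :: "'h::complex_hilbert \<Rightarrow> 'h" where
  "op_zero = (\<lambda>x. 0)"

definition concrete_opsys :: "('h::complex_hilbert \<Rightarrow> 'h) set \<Rightarrow> bool" where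
  "concrete_opsys V \<longleftrightarrow> V \<subseteq> BH \<and> op_zero \<in> V \<and> id \<in> V
     \<and> (\<forall>S\<in>V. \<forall>T\<in>V. op_add S T \<in> V)
     \<and> (\<forall>c. \<forall>T\<in>V. op_scale c T \<in> V)
     \<and> (\<forall>T\<in>V. adj T \<in> V)"

definition is_projection :: "('h::complex_hilbert \<Rightarrow> 'h) \<Rightarrow> bool" where
  "is_projection p \<longleftrightarrow> p \<in> BH \<and> adj p = p \<and> p \<circ> p = p"

section \<open>Matrices over a carrier (n x n matrices as functions nat => nat => 'v, entries outside
  the range {0..<n} equal to the zero vector)\<close>

definition matc :: "'v set \<Rightarrow> 'v \<Rightarrow> nat \<Rightarrow> (nat \<Rightarrow> nat \<Rightarrow> 'v) set" where
  "matc W z n = {X. (\<forall>i<n. \<forall>j<n. X i j \<in> W) \<and> (\<forall>i j. \<not> (i < n \<and> j < n) \<longrightarrow> X i j = z)}"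

definition herm :: "('v \<Rightarrow> 'v) \<Rightarrow> nat \<Rightarrow> (nat \<Rightarrow> nat \<Rightarrow> 'v) \<Rightarrow> bool" where
  "herm st n X \<longleftrightarrow> (\<forall>i<n. \<forall>j<n. st (X i j) = X j i)"

fun vsum :: "('v \<Rightarrow> 'v \<Rightarrow> 'v) \<Rightarrow> 'v \<Rightarrow> (nat \<Rightarrow> 'v) \<Rightarrow> nat \<Rightarrow> 'v" where
  "vsum add z f 0 = z"
| "vsum add z f (Suc n) = add (vsum add z f n) (f n)"

text \<open>alpha^* X alpha for alpha an n x m complex matrix and X an n x n matrix\<close>
definition conj_mat :: "('v \<Rightarrow> 'v \<Rightarrow> 'v) \<Rightarrow> (complex \<Rightarrow> 'v \<Rightarrow> 'v) \<Rightarrow> 'v \<Rightarrow> nat \<Rightarrow> nat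
     \<Rightarrow> (nat \<Rightarrow> nat \<Rightarrow> complex) \<Rightarrow> (nat \<Rightarrow> nat \<Rightarrow> 'v) \<Rightarrow> (nat \<Rightarrow> nat \<Rightarrow> 'v)" where
  "conj_mat add sm z n m \<alpha> X = (\<lambda>k l. if k < m \<and> l < m then
      vsum add z (\<lambda>i. vsum add z (\<lambda>j. sm (cnj (\<alpha> i k) * \<alpha> j l) (X i j)) n) n else z)"

definition unit_mat :: "'v \<Rightarrow> 'v \<Rightarrow> nat \<Rightarrow> (nat \<Rightarrow> nat \<Rightarrow> 'v)" where
  "unit_mat z e n = (\<lambda>i j. if i < n \<and> i = j then e else z)"

definition cvector_space :: "'v set \<Rightarrow> ('v \<Rightarrow> 'v \<Rightarrow> 'v) \<Rightarrow> (complex \<Rightarrow> 'v \<Rightarrow> 'v) \<Rightarrow> 'v \<Rightarrow> bool" where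
  "cvector_space W add sm z \<longleftrightarrow> z \<in> W
     \<and> (\<forall>x\<in>W. \<forall>y\<in>W. add x y \<in> W) \<and> (\<forall>c. \<forall>x\<in>W. sm c x \<in> W)
     \<and> (\<forall>x\<in>W. \<forall>y\<in>W. \<forall>u\<in>W. add (add x y) u = add x (add y u))
     \<and> (\<forall>x\<in>W. \<forall>y\<in>W. add x y = add y x)
     \<and> (\<forall>x\<in>W. add z x = x)
     \<and> (\<forall>x\<in>W. \<exists>y\<in>W. add x y = z)
     \<and> (\<forall>a. \<forall>x\<in>W. \<forall>y\<in>W. sm a (add x y) = add (sm a x) (sm a y))
     \<and> (\<forall>a b. \<forall>x\<in>W. sm (a + b) x = add (sm a x) (sm b x))
     \<and> (\<forall>a b. \<forall>x\<in>W. sm a (sm b x) = sm (a * b) x)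
     \<and> (\<forall>x\<in>W. sm 1 x = x)"

definition star_vector_space :: "'v set \<Rightarrow> ('v \<Rightarrow> 'v \<Rightarrow> 'v) \<Rightarrow> (complex \<Rightarrow> 'v \<Rightarrow> 'v) \<Rightarrow> 'v
     \<Rightarrow> ('v \<Rightarrow> 'v) \<Rightarrow> bool" where
  "star_vector_space W add sm z st \<longleftrightarrow> cvector_space W add sm z
     \<and> (\<forall>x\<in>W. st x \<in> W) \<and> (\<forall>x\<in>W. st (st x) = x)
     \<and> (\<forall>x\<in>W. \<forall>y\<in>W. st (add x y) = add (st x) (st y))
     \<and> (\<forall>c. \<forall>x\<in>W. st (sm c x) = sm (cnj c) (st x))"

definition proper_matrix_ordering :: "'v set \<Rightarrow> ('v \<Rightarrow> 'v \<Rightarrow> 'v) \<Rightarrow> (complex \<Rightarrow> 'v \<Rightarrow> 'v) \<Rightarrow> 'v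
     \<Rightarrow> ('v \<Rightarrow> 'v) \<Rightarrow> (nat \<Rightarrow> (nat \<Rightarrow> nat \<Rightarrow> 'v) set) \<Rightarrow> bool" where
  "proper_matrix_ordering W add sm z st D \<longleftrightarrow>
     (\<forall>n\<ge>1. D n \<subseteq> {X \<in> matc W z n. herm st n X})
     \<and> (\<forall>n\<ge>1. \<forall>X\<in>D n. \<forall>Y\<in>D n. (\<lambda>i j. add (X i j) (Y i j)) \<in> D n)
     \<and> (\<forall>n\<ge>1. \<forall>X\<in>D n. \<forall>r::real. r \<ge> 0 \<longrightarrow> (\<lambda>i j. sm (complex_of_real r) (X i j)) \<in> D n)
     \<and> (\<forall>n\<ge>1. \<forall>m\<ge>1. \<forall>\<alpha>. \<forall>X\<in>D n. conj_mat add sm z n m \<alpha> X \<in> D m)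
     \<and> (\<forall>n\<ge>1. \<forall>X\<in>D n. (\<lambda>i j. sm (-1) (X i j)) \<in> D n \<longrightarrow> X = (\<lambda>i j. z))"

definition archimedean_matrix_order_unit :: "'v set \<Rightarrow> ('v \<Rightarrow> 'v \<Rightarrow> 'v) \<Rightarrow> (complex \<Rightarrow> 'v \<Rightarrow> 'v) \<Rightarrow> 'v
     \<Rightarrow> ('v \<Rightarrow> 'v) \<Rightarrow> (nat \<Rightarrow> (nat \<Rightarrow> nat \<Rightarrow> 'v) set) \<Rightarrow> 'v \<Rightarrow> bool" where
  "archimedean_matrix_order_unit W add sm z st D e \<longleftrightarrow> e \<in> W \<and> st e = e
     \<and> (\<forall>n\<ge>1. \<forall>X\<in>matc W z n. herm st n X \<longrightarrow>
           (\<exists>r::real. r > 0 \<and>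
              (\<lambda>i j. add (sm (complex_of_real r) (unit_mat z e n i j)) (X i j)) \<in> D n))
     \<and> (\<forall>n\<ge>1. \<forall>X\<in>matc W z n. herm st n X \<longrightarrow>
           (\<forall>r::real. r > 0 \<longrightarrow>
              (\<lambda>i j. add (sm (complex_of_real r) (unit_mat z e n i j)) (X i j)) \<in> D n)
           \<longrightarrow> X \<in> D n)"

definition operator_system :: "'v set \<Rightarrow> ('v \<Rightarrow> 'v \<Rightarrow> 'v) \<Rightarrow> (complex \<Rightarrow> 'v \<Rightarrow> 'v) \<Rightarrow> 'v
     \<Rightarrow> ('v \<Rightarrow> 'v) \<Rightarrow> (nat \<Rightarrow> (nat \<Rightarrow> nat \<Rightarrow> 'v) set) \<Rightarrow> 'v \<Rightarrow> bool" where
  "operator_system W add sm z st D e \<longleftrightarrow> star_vector_space W add sm z st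
     \<and> proper_matrix_ordering W add sm z st D \<and> archimedean_matrix_order_unit W add sm z st D e"

text \<open>p_n x p_n \<ge> 0 in B(H^n), written out on vectors xi = (xi_0,...,xi_{n-1}) of H^n.\<close>
definition Cp :: "('h::complex_hilbert \<Rightarrow> 'h) set \<Rightarrow> ('h \<Rightarrow> 'h) \<Rightarrow> nat
     \<Rightarrow> (nat \<Rightarrow> nat \<Rightarrow> ('h \<Rightarrow> 'h)) set" where
  "Cp V p n = {X \<in> matc V op_zero n. herm adj n X \<and>
     (\<forall>\<xi>::nat \<Rightarrow> 'h. let q = (\<Sum>i<n. \<Sum>j<n. cinner ((p \<circ> X i j \<circ> p) (\<xi> j)) (\<xi> i))
                      in Im q = 0 \<and> Re q \<ge> 0)}"

definition C1 :: "('h::complex_hilbert \<Rightarrow> 'h) set \<Rightarrow> ('h \<Rightarrow> 'h) \<Rightarrow> ('h \<Rightarrow> 'h) set" where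
  "C1 V p = {x. (\<lambda>i j. if i = 0 \<and> j = 0 then x else op_zero) \<in> Cp V p 1}"

definition cspan :: "('h::complex_hilbert \<Rightarrow> 'h) set \<Rightarrow> ('h \<Rightarrow> 'h) set" where
  "cspan S = {T. \<exists>k (c::nat \<Rightarrow> complex) a. (\<forall>i<k. a i \<in> S) \<and>
                  T = (\<lambda>x. \<Sum>i<k. scaleC (c i) (a i x))}"

definition Jp :: "('h::complex_hilbert \<Rightarrow> 'h) set \<Rightarrow> ('h \<Rightarrow> 'h) \<Rightarrow> ('h \<Rightarrow> 'h) set" where
  "Jp V p = cspan (C1 V p \<inter> op_scale (-1) ` C1 V p)"

definition coset :: "('h::complex_hilbert \<Rightarrow> 'h) set \<Rightarrow> ('h \<Rightarrow> 'h) \<Rightarrow> ('h \<Rightarrow> 'h) set" where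
  "coset J x = {op_add x j | j. j \<in> J}"

definition quot :: "('h::complex_hilbert \<Rightarrow> 'h) set \<Rightarrow> ('h \<Rightarrow> 'h) set \<Rightarrow> ('h \<Rightarrow> 'h) set set" where
  "quot V J = coset J ` V"

definition qrep :: "('h::complex_hilbert \<Rightarrow> 'h) set \<Rightarrow> ('h \<Rightarrow> 'h)" where
  "qrep A = (SOME a. a \<in> A)"

definition qadd :: "('h::complex_hilbert \<Rightarrow> 'h) set \<Rightarrow> ('h \<Rightarrow> 'h) set \<Rightarrow> ('h \<Rightarrow> 'h) set \<Rightarrow> ('h \<Rightarrow> 'h) set" where
  "qadd J A B = coset J (op_add (qrep A) (qrep B))"

definition qscale :: "('h::complex_hilbert \<Rightarrow> 'h) set \<Rightarrow> complex \<Rightarrow> ('h \<Rightarrow> 'h) set \<Rightarrow> ('h \<Rightarrow> 'h) set" where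
  "qscale J c A = coset J (op_scale c (qrep A))"

definition qstar :: "('h::complex_hilbert \<Rightarrow> 'h) set \<Rightarrow> ('h \<Rightarrow> 'h) set \<Rightarrow> ('h \<Rightarrow> 'h) set" where
  "qstar J A = coset J (adj (qrep A))"

definition Ctilde :: "('h::complex_hilbert \<Rightarrow> 'h) set \<Rightarrow> ('h \<Rightarrow> 'h) \<Rightarrow> nat
     \<Rightarrow> (nat \<Rightarrow> nat \<Rightarrow> ('h \<Rightarrow> 'h) set) set" where
  "Ctilde V p n = (\<lambda>X. \<lambda>i j. coset (Jp V p) (X i j)) ` Cp V p n"

end

theory Submission
  imports Defs
begin

(*
  Everything rests on the description J_p = {x \<in> V. p x p = 0}. An element of
  C(p) \<inter> -C(p) has vanishing form <p x p v, v>, hence p x p = 0 by polarization;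
  conversely, if p x p = 0 then the real and imaginary parts of x are selfadjoint with
  vanishing compression, so they lie in C(p) \<inter> -C(p) and x lies in their span.
  Thus J_p is a *-subspace killed by the compression, and since C(p_n) is defined through
  the compressions p x_ij p alone, a matrix of cosets lies in the quotient cone exactly when
  its selfadjoint lifts lie in C(p_n). The cone axioms then descend from C(p_n); properness
  is polarization once more; and p + J_p is an Archimedean matrix order unit because the
  form of r p_n + X is r (\<Sum>i. |p v_i|^2) plus the form of X, which is bounded by a multiple
  of \<Sum>i. |p v_i|^2. Adjoints of bounded operators, used throughout, come from the Riesz
  representation theorem, proved via the point of least norm on a closed affine hyperplane.
*)

section \<open>Complex Hilbert spaces and the Riesz representation\<close>

lemma module_scaleC: "module (scaleC :: complex \<Rightarrow> 'a::complex_hilbert \<Rightarrow> 'a)"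
  by unfold_locales (auto simp: scaleC_add_right scaleC_add_left scaleC_scaleC scaleC_one)

lemmas scaleC_zero_left[simp] = module.scale_zero_left[OF module_scaleC]
lemmas scaleC_zero_right[simp] = module.scale_zero_right[OF module_scaleC]
lemmas scaleC_minus_left[simp] = module.scale_minus_left[OF module_scaleC]
lemmas scaleC_minus_right[simp] = module.scale_minus_right[OF module_scaleC]
lemmas scaleC_diff_left = module.scale_left_diff_distrib[OF module_scaleC]
lemmas scaleC_diff_right = module.scale_right_diff_distrib[OF module_scaleC]
declare scaleC_scaleC[simp] scaleC_one[simp]

lemma scaleC_half_diff: "scaleC (1/2) (a + b) - a = scaleC (1/2) (b - (a::'a::complex_hilbert))"
proof -
  have "scaleC (1/2) (a + b) - a = scaleC (1/2) b + (scaleC (1/2) a - scaleC 1 a)"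
    by (simp add: scaleC_add_right)
  also have "scaleC (1/2) a - scaleC 1 a = - scaleC (1/2) a"
    using scaleC_diff_left[of "1/2" 1 a] by simp
  finally show ?thesis by (simp add: scaleC_diff_right)
qed

lemma cinner_add_right: "cinner x (y + z) = cinner x y + cinner x (z::'a::complex_hilbert)"
  by (metis cinner_add_left cinner_commute complex_cnj_add)

lemma cinner_scaleC_right: "cinner x (scaleC a y) = cnj a * cinner x (y::'a::complex_hilbert)"
  by (metis cinner_commute cinner_scaleC_left complex_cnj_mult)

lemma cinner_zero_left[simp]: "cinner 0 (x::'a::complex_hilbert) = 0"
  using cinner_add_left[of 0 0 x] by simp

lemma cinner_zero_right[simp]: "cinner x (0::'a::complex_hilbert) = 0"
  by (metis cinner_commute cinner_zero_left complex_cnj_zero)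

lemma cinner_minus_left[simp]: "cinner (- x) (y::'a::complex_hilbert) = - cinner x y"
  using cinner_add_left[of "- x" x y] by (simp add: eq_neg_iff_add_eq_0)

lemma cinner_minus_right[simp]: "cinner x (- y::'a::complex_hilbert) = - cinner x y"
  by (metis cinner_commute cinner_minus_left complex_cnj_minus)

lemma cinner_diff_left: "cinner (x - y) (z::'a::complex_hilbert) = cinner x z - cinner y z"
  by (simp only: diff_conv_add_uminus cinner_add_left cinner_minus_left)

lemma cinner_diff_right: "cinner x (y - z::'a::complex_hilbert) = cinner x y - cinner x z"
  by (simp only: diff_conv_add_uminus cinner_add_right cinner_minus_right)

lemma cinner_sum_left: "cinner (\<Sum>i\<in>A. f i) (z::'a::complex_hilbert) = (\<Sum>i\<in>A. cinner (f i) z)"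
  by (induct A rule: infinite_finite_induct) (auto simp: cinner_add_left)

lemma cinner_sum_right: "cinner z (\<Sum>i\<in>A. f i) = (\<Sum>i\<in>A. cinner (z::'a::complex_hilbert) (f i))"
  by (induct A rule: infinite_finite_induct) (auto simp: cinner_add_right)

declare cinner_scaleC_left[simp] cinner_scaleC_right[simp]

lemma cinner_ext: "(\<And>x. cinner x a = cinner x b) \<Longrightarrow> a = (b::'a::complex_hilbert)"
  by (metis cinner_diff_right cinner_eq_zero diff_self eq_iff_diff_eq_0)

definition sqnorm :: "'a::complex_hilbert \<Rightarrow> real" where
  "sqnorm x = Re (cinner x x)"

lemma sqnorm_nonneg: "sqnorm x \<ge> 0"
  using cinner_ge_zero[of x] by (simp add: sqnorm_def)

lemma cinner_self: "cinner x x = complex_of_real (sqnorm x)"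
  using cinner_ge_zero[of x] by (simp add: sqnorm_def complex_eq_iff)

lemma sqnorm_eq_0_iff: "sqnorm x = 0 \<longleftrightarrow> x = 0"
  by (metis cinner_eq_zero cinner_self of_real_eq_0_iff)

lemma sqnorm_pos: "x \<noteq> 0 \<Longrightarrow> sqnorm x > 0"
  using sqnorm_eq_0_iff sqnorm_nonneg by (metis less_eq_real_def)

lemma hnorm_eq_sqrt_sqnorm: "hnorm x = sqrt (sqnorm x)"
  by (simp add: hnorm_def sqnorm_def)

lemma hnorm_nonneg: "hnorm x \<ge> 0"
  by (simp add: hnorm_eq_sqrt_sqnorm sqnorm_nonneg)

lemma hnorm_square: "(hnorm x)\<^sup>2 = sqnorm x"
  by (simp add: hnorm_eq_sqrt_sqnorm sqnorm_nonneg)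

lemma sqnorm_add: "sqnorm (x + y) = sqnorm x + sqnorm y + 2 * Re (cinner x (y::'a::complex_hilbert))"
proof -
  have "cinner (x + y) (x + y) = cinner x x + cinner y y + (cinner x y + cinner y x)"
    by (simp add: cinner_add_left cinner_add_right algebra_simps)
  moreover have "Re (cinner y x) = Re (cinner x y)" by (simp add: cinner_commute[of y x])
  ultimately show ?thesis by (simp add: sqnorm_def)
qed

lemma sqnorm_scaleC: "sqnorm (scaleC a x) = (cmod a)\<^sup>2 * sqnorm (x::'a::complex_hilbert)"
proof -
  have "cinner (scaleC a x) (scaleC a x) = (a * cnj a) * cinner x x" by (simp add: algebra_simps)
  also have "\<dots> = complex_of_real ((cmod a)\<^sup>2 * sqnorm x)"
    by (simp add: complex_norm_square[symmetric] cinner_self)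
  finally show ?thesis by (simp add: sqnorm_def)
qed

lemma sqnorm_diff: "sqnorm (x - y) = sqnorm x + sqnorm y - 2 * Re (cinner x (y::'a::complex_hilbert))"
  using sqnorm_add[of x "- y"] sqnorm_scaleC[of "-1" y] by simp

lemma parallelogram_law:
  "sqnorm (x - y) = 2 * sqnorm x + 2 * sqnorm y - 4 * sqnorm (scaleC (1/2) (x + y::'a::complex_hilbert))"
  by (simp add: sqnorm_scaleC sqnorm_add sqnorm_diff power2_eq_square field_simps)

lemma Cauchy_Schwarz_sq: "(cmod (cinner x y))\<^sup>2 \<le> sqnorm x * sqnorm (y::'a::complex_hilbert)"
proof (cases "y = 0")
  case True
  then show ?thesis by (simp add: sqnorm_def)
next
  case False
  define D where "D = sqnorm y"
  have D: "D > 0" using sqnorm_pos[OF False] by (simp add: D_def)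
  define c where "c = cinner x y"
  define t where "t = c / complex_of_real D"
  have cc: "c * cnj c = complex_of_real ((cmod c)\<^sup>2)" by (rule complex_norm_square[symmetric])
  have "cinner (x - scaleC t y) (x - scaleC t y)
     = cinner x x - cnj t * c - t * cnj c + t * cnj t * complex_of_real D"
    unfolding cinner_diff_left cinner_diff_right cinner_scaleC_left cinner_scaleC_right
    by (simp add: cinner_commute[of y x] cinner_self c_def D_def algebra_simps)
  also have "\<dots> = cinner x x - complex_of_real ((cmod c)\<^sup>2 / D)"
    using cc D by (simp add: t_def field_simps power2_eq_square)
  finally have "sqnorm (x - scaleC t y) = sqnorm x - (cmod c)\<^sup>2 / D"
    by (simp add: sqnorm_def)
  then have "(cmod c)\<^sup>2 / D \<le> sqnorm x" using sqnorm_nonneg[of "x - scaleC t y"] by linarith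
  then show ?thesis using D by (simp add: c_def D_def pos_divide_le_eq)
qed

lemma Cauchy_Schwarz: "cmod (cinner x y) \<le> hnorm x * hnorm (y::'a::complex_hilbert)"
  using Cauchy_Schwarz_sq[of x y]
  by (simp add: hnorm_eq_sqrt_sqnorm real_le_rsqrt real_sqrt_mult[symmetric] sqnorm_nonneg)

lemma hnorm_triangle: "hnorm (x + y) \<le> hnorm x + hnorm (y::'a::complex_hilbert)"
proof -
  have "Re (cinner x y) \<le> hnorm x * hnorm y"
    using complex_Re_le_cmod Cauchy_Schwarz order_trans by blast
  then have "sqnorm (x + y) \<le> (hnorm x + hnorm y)\<^sup>2"
    by (simp add: sqnorm_add power2_sum hnorm_square)
  then show ?thesis
    using hnorm_nonneg[of x] hnorm_nonneg[of y] real_le_lsqrt by (simp add: hnorm_eq_sqrt_sqnorm)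
qed

lemma hnorm_minus_commute: "hnorm (x - y) = hnorm (y - (x::'a::complex_hilbert))"
  using sqnorm_scaleC[of "-1" "x - y"] by (simp add: hnorm_eq_sqrt_sqnorm)

lemma abs_hnorm_diff_le: "\<bar>hnorm x - hnorm y\<bar> \<le> hnorm (x - (y::'a::complex_hilbert))"
  using hnorm_triangle[of "x - y" y] hnorm_triangle[of "y - x" x] hnorm_minus_commute[of x y]
  by simp

lemma hnorm_mult_le_sqnorm_add: "hnorm a * hnorm b \<le> sqnorm a + sqnorm (b::'h::complex_hilbert)"
proof -
  have "2 * (hnorm a * hnorm b) \<le> sqnorm a + sqnorm b"
    using sum_squares_bound[of "hnorm a" "hnorm b"] by (simp add: hnorm_square)
  moreover have "0 \<le> hnorm a * hnorm b" using hnorm_nonneg[of a] hnorm_nonneg[of b] by simp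
  ultimately show ?thesis by linarith
qed

lemma minimizing_sequence_Cauchy:
  fixes xs :: "nat \<Rightarrow> 'a::complex_hilbert"
  assumes lower: "\<And>m n. d \<le> sqnorm (scaleC (1/2) (xs m + xs n))"
    and upper: "\<And>n. sqnorm (xs n) < d + 1 / (real n + 1)"
  shows "\<forall>e>0. \<exists>N. \<forall>m\<ge>N. \<forall>n\<ge>N. sqrt (Re (cinner (xs m - xs n) (xs m - xs n))) < e"
proof (intro allI impI)
  fix e :: real assume e: "e > 0"
  obtain N :: nat where "4 / e\<^sup>2 < real N"
    using reals_Archimedean2 by blast
  then have "4 < real N * e\<^sup>2"
    using e by (simp add: divide_less_eq mult.commute)
  also have "\<dots> < (real N + 1) * e\<^sup>2"
    using e by (simp add: distrib_right)
  finally have N: "4 / (real N + 1) < e\<^sup>2"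
    by (simp add: divide_less_eq mult.commute)
  show "\<exists>N. \<forall>m\<ge>N. \<forall>n\<ge>N. sqrt (Re (cinner (xs m - xs n) (xs m - xs n))) < e"
  proof (intro exI allI impI)
    fix m n assume "N \<le> m" "N \<le> n"
    then have "1 / (real m + 1) \<le> 1 / (real N + 1)" "1 / (real n + 1) \<le> 1 / (real N + 1)"
      by (simp_all add: frac_le)
    then have "sqnorm (xs m - xs n) < e\<^sup>2"
      using N parallelogram_law[of "xs m" "xs n"] lower[of m n] upper[of m] upper[of n] by linarith
    then have "sqrt (sqnorm (xs m - xs n)) < sqrt (e\<^sup>2)" by (rule real_sqrt_less_mono)
    then show "sqrt (Re (cinner (xs m - xs n) (xs m - xs n))) < e"
      using e by (simp add: sqnorm_def)
  qed
qed

lemma sqnorm_le_of_tendsto: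
  assumes lim: "(\<lambda>n. hnorm (xs n - u)) \<longlonglongrightarrow> 0"
    and upper: "\<And>n. sqnorm (xs n) < d + 1 / (real n + 1)"
  shows "sqnorm u \<le> d"
proof -
  have "(\<lambda>n. hnorm (xs n) - hnorm u) \<longlonglongrightarrow> 0"
    by (rule tendsto_0_le[OF lim, where K = 1]) (simp add: abs_hnorm_diff_le hnorm_nonneg)
  then have "(\<lambda>n. hnorm (xs n)) \<longlonglongrightarrow> hnorm u" by (rule LIM_zero_cancel)
  then have "(\<lambda>n. (hnorm (xs n))\<^sup>2) \<longlonglongrightarrow> (hnorm u)\<^sup>2" by (rule tendsto_power)
  moreover have "(\<lambda>n. d + 1 / (real n + 1)) \<longlonglongrightarrow> d"
    using LIMSEQ_inverse_real_of_nat_add[of d] by (simp add: inverse_eq_divide add.commute)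
  moreover have "\<exists>N. \<forall>n\<ge>N. (hnorm (xs n))\<^sup>2 \<le> d + 1 / (real n + 1)"
    using upper by (simp add: hnorm_square less_imp_le)
  ultimately have "(hnorm u)\<^sup>2 \<le> d" by (rule LIMSEQ_le)
  then show ?thesis by (simp add: hnorm_square)
qed

lemma exists_min_sqnorm_level_set:
  fixes f :: "'a::complex_hilbert \<Rightarrow> complex"
  assumes add: "\<And>x y. f (x + y) = f x + f y" and sc: "\<And>a x. f (scaleC a x) = a * f x"
    and bd: "\<And>x. cmod (f x) \<le> K * hnorm x" and x0: "f x0 = 1"
  shows "\<exists>u. f u = 1 \<and> (\<forall>x. f x = 1 \<longrightarrow> sqnorm u \<le> sqnorm x)"
proof -
  define d where "d = Inf (sqnorm ` {x. f x = 1})"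
  have "bdd_below (sqnorm ` {x. f x = 1})"
    using sqnorm_nonneg by (meson bdd_belowI2)
  then have d_le: "d \<le> sqnorm x" if "f x = 1" for x
    unfolding d_def using that by (simp add: cInf_lower)
  have ne: "sqnorm ` {x. f x = 1} \<noteq> {}" using x0 by auto
  have "\<forall>n. \<exists>x. f x = 1 \<and> sqnorm x < d + 1 / (real n + 1)"
  proof
    fix n
    have "Inf (sqnorm ` {x. f x = 1}) < d + 1 / (real n + 1)" unfolding d_def by simp
    from cInf_lessD[OF ne this] show "\<exists>x. f x = 1 \<and> sqnorm x < d + 1 / (real n + 1)" by auto
  qed
  then obtain xs where "\<forall>n. f (xs n) = 1 \<and> sqnorm (xs n) < d + 1 / (real n + 1)"
    by (rule choice[THEN exE])
  then have xs: "\<And>n. f (xs n) = 1" "\<And>n. sqnorm (xs n) < d + 1 / (real n + 1)"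
    by auto
  have "d \<le> sqnorm (scaleC (1/2) (xs m + xs n))" for m n
    using xs(1) by (intro d_le) (simp add: sc add)
  from complete[OF minimizing_sequence_Cauchy[OF this xs(2)]]
  obtain u where "\<forall>e>0. \<exists>N. \<forall>n\<ge>N. sqrt (Re (cinner (xs n - u) (xs n - u))) < e"
    by blast
  then have lim: "(\<lambda>n. hnorm (xs n - u)) \<longlonglongrightarrow> 0"
    unfolding LIMSEQ_iff by (simp add: hnorm_def[symmetric] hnorm_nonneg)
  have f_diff: "f (x - y) = f x - f y" for x y
    using add[of "x - y" y] by simp
  have "(\<lambda>n. f u - 1) \<longlonglongrightarrow> 0"
  proof (rule tendsto_0_le[OF lim, where K = K])
    have "cmod (f u - 1) \<le> hnorm (xs n - u) * K" for n
      using bd[of "u - xs n"] xs(1)[of n] by (simp add: f_diff hnorm_minus_commute mult.commute)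
    then show "\<forall>\<^sub>F n in sequentially. norm (f u - 1) \<le> norm (hnorm (xs n - u)) * K"
      by (simp add: hnorm_nonneg)
  qed
  then have fu: "f u = 1" by (simp add: LIMSEQ_const_iff)
  moreover have "sqnorm u \<le> d" using sqnorm_le_of_tendsto[OF lim xs(2)] .
  ultimately show ?thesis using d_le order_trans by blast
qed

lemma min_sqnorm_level_set_orthogonal:
  fixes f :: "'a::complex_hilbert \<Rightarrow> complex"
  assumes add: "\<And>x y. f (x + y) = f x + f y" and sc: "\<And>a x. f (scaleC a x) = a * f x"
    and fu: "f u = 1" and min: "\<And>x. f x = 1 \<Longrightarrow> sqnorm u \<le> sqnorm x" and fw: "f w = 0"
  shows "cinner w u = 0"
proof -
  define c where "c = cinner u w"
  define s where "s = 1 / (sqnorm w + 1)"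
  have s: "s > 0" "s * sqnorm w \<le> 1"
    using sqnorm_nonneg[of w] by (auto simp: s_def field_simps)
  define t where "t = - (complex_of_real s * c)"
  \<comment> \<open>u + t w stays on the level set; minimality of u against this small step forces c = 0\<close>
  have "sqnorm u \<le> sqnorm (u + scaleC t w)" using fu fw by (intro min) (simp add: add sc)
  also have "\<dots> = sqnorm u + (cmod t)\<^sup>2 * sqnorm w + 2 * Re (cnj t * c)"
    by (simp add: sqnorm_add sqnorm_scaleC c_def)
  also have "(cmod t)\<^sup>2 = s\<^sup>2 * (cmod c)\<^sup>2"
    using s(1) by (simp add: t_def norm_mult power_mult_distrib)
  also have "cnj t * c = complex_of_real (- s * (cmod c)\<^sup>2)"
  proof -
    have "cnj t * c = - complex_of_real s * (c * cnj c)" by (simp add: t_def)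
    then show ?thesis by (simp only: complex_norm_square[symmetric]) simp
  qed
  finally have "2 * s * (cmod c)\<^sup>2 \<le> (s * sqnorm w) * (s * (cmod c)\<^sup>2)"
    by (simp add: power2_eq_square algebra_simps)
  also have "\<dots> \<le> s * (cmod c)\<^sup>2" using s sqnorm_nonneg[of w] by (intro mult_left_le_one_le) auto
  finally have "s * (cmod c)\<^sup>2 \<le> 0" by simp
  then have "cmod c = 0" using s(1) by (simp add: mult_le_0_iff)
  then show ?thesis by (simp add: c_def cinner_commute[of w u])
qed

lemma riesz_representation:
  fixes f :: "'a::complex_hilbert \<Rightarrow> complex"
  assumes add: "\<And>x y. f (x + y) = f x + f y" and sc: "\<And>a x. f (scaleC a x) = a * f x"
    and bd: "\<And>x. cmod (f x) \<le> K * hnorm x"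
  shows "\<exists>z. \<forall>x. f x = cinner x z"
proof (cases "\<forall>x. f x = 0")
  case True
  then show ?thesis by (intro exI[of _ 0]) simp
next
  case False
  then obtain x0 where "f x0 \<noteq> 0" by blast
  then have "f (scaleC (1 / f x0) x0) = 1" by (simp add: sc)
  then obtain u where fu: "f u = 1" and min: "\<And>x. f x = 1 \<Longrightarrow> sqnorm u \<le> sqnorm x"
    using exists_min_sqnorm_level_set[OF add sc bd] by blast
  have f_diff: "f (x - y) = f x - f y" for x y
    using add[of "x - y" y] by simp
  have orth: "cinner w u = 0" if "f w = 0" for w
    using min_sqnorm_level_set_orthogonal[OF add sc fu min that] .
  have "u \<noteq> 0" using fu add[of 0 0] by auto
  then have u: "sqnorm u > 0" by (rule sqnorm_pos)
  show ?thesis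
  proof (intro exI allI)
    fix x
    have "f (x - scaleC (f x) u) = 0" by (simp add: f_diff sc fu)
    then have "cinner (x - scaleC (f x) u) u = 0" by (rule orth)
    then have "cinner x u = f x * complex_of_real (sqnorm u)"
      by (simp add: cinner_diff_left cinner_self)
    then show "f x = cinner x (scaleC (complex_of_real (1 / sqnorm u)) u)"
      using u by simp
  qed
qed

section \<open>Bounded operators and adjoints\<close>

lemma BH_add: "T \<in> BH \<Longrightarrow> T (x + y) = T x + T y"
  by (simp add: BH_def clinear_op_def)

lemma BH_scaleC: "T \<in> BH \<Longrightarrow> T (scaleC a x) = scaleC a (T x)"
  by (simp add: BH_def clinear_op_def)

lemma BH_zero: "T \<in> BH \<Longrightarrow> T 0 = 0"
  using BH_add[of T 0 0] by simp

lemma BH_minus: "T \<in> BH \<Longrightarrow> T (- x) = - T x"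
  using BH_scaleC[of T "-1" x] by simp

lemma BH_diff: "T \<in> BH \<Longrightarrow> T (x - y) = T x - T y"
  using BH_add[of T "x - y" y] by (simp add: eq_diff_eq)

lemma BH_sum: "T \<in> BH \<Longrightarrow> T (\<Sum>i\<in>A. f i) = (\<Sum>i\<in>A. T (f i))"
  by (induct A rule: infinite_finite_induct) (auto simp: BH_zero BH_add)

lemma BH_bound:
  fixes T :: "'h::complex_hilbert \<Rightarrow> 'h"
  assumes "T \<in> BH"
  shows "\<exists>K\<ge>0. \<forall>x. hnorm (T x) \<le> K * hnorm x"
proof -
  obtain K where K: "\<And>x. hnorm (T x) \<le> K * hnorm x" using assms by (auto simp: BH_def)
  have "hnorm (T x) \<le> max K 0 * hnorm x" for x
  proof -
    have "K * hnorm x \<le> max K 0 * hnorm x" using hnorm_nonneg[of x] by (intro mult_right_mono) auto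
    then show ?thesis using K[of x] by linarith
  qed
  then show ?thesis by (intro exI[of _ "max K 0"]) auto
qed

lemma adj_exists:
  assumes T: "T \<in> BH"
  shows "\<exists>S. \<forall>x y. cinner (T x) y = cinner x (S y)"
proof -
  obtain K where K: "K \<ge> 0" "\<And>x. hnorm (T x) \<le> K * hnorm x" using BH_bound[OF T] by blast
  have "\<exists>z. \<forall>x. cinner (T x) y = cinner x z" for y
  proof (rule riesz_representation[where K = "K * hnorm y"])
    show "cinner (T (x1 + x2)) y = cinner (T x1) y + cinner (T x2) y" for x1 x2
      by (simp add: BH_add[OF T] cinner_add_left)
    show "cinner (T (scaleC a x)) y = a * cinner (T x) y" for a x
      by (simp add: BH_scaleC[OF T])
    show "cmod (cinner (T x) y) \<le> K * hnorm y * hnorm x" for x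
    proof -
      have "cmod (cinner (T x) y) \<le> hnorm (T x) * hnorm y" by (rule Cauchy_Schwarz)
      also have "\<dots> \<le> K * hnorm x * hnorm y"
        using K(2)[of x] hnorm_nonneg[of y] by (rule mult_right_mono)
      finally show ?thesis by (simp add: algebra_simps)
    qed
  qed
  then show ?thesis by metis
qed

lemma cinner_adj_right: "T \<in> BH \<Longrightarrow> cinner (T x) y = cinner x (adj T y)"
  unfolding adj_def using someI_ex[OF adj_exists] by blast

lemma cinner_adj_left: "T \<in> BH \<Longrightarrow> cinner (adj T y) x = cinner y (T x)"
  by (metis cinner_adj_right cinner_commute)

lemma adj_eqI:
  assumes S: "\<And>x y. cinner (T x) y = cinner x (S y)"
  shows "adj T = S"
proof
  have "\<forall>x y. cinner (T x) y = cinner x (adj T y)"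
    unfolding adj_def using someI_ex[of "\<lambda>S. \<forall>x y. cinner (T x) y = cinner x (S y)"] S by blast
  then show "adj T y = S y" for y by (intro cinner_ext) (simp add: S)
qed

lemma adj_adj: "T \<in> BH \<Longrightarrow> adj (adj T) = T"
  by (rule adj_eqI) (simp add: cinner_adj_left)

lemma adj_op_add: "S \<in> BH \<Longrightarrow> T \<in> BH \<Longrightarrow> adj (op_add S T) = op_add (adj S) (adj T)"
  by (rule adj_eqI) (simp add: op_add_def cinner_add_left cinner_add_right cinner_adj_right)

lemma adj_op_scale: "T \<in> BH \<Longrightarrow> adj (op_scale c T) = op_scale (cnj c) (adj T)"
  by (rule adj_eqI) (simp add: op_scale_def cinner_adj_right)

lemma adj_op_zero: "adj op_zero = op_zero"
  by (rule adj_eqI) (simp add: op_zero_def)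

lemma op_matrix_eq_0_of_form_eq_0:
  fixes A :: "nat \<Rightarrow> nat \<Rightarrow> 'h::complex_hilbert \<Rightarrow> 'h"
  assumes add: "\<And>i j x y. i < n \<Longrightarrow> j < n \<Longrightarrow> A i j (x + y) = A i j x + A i j y"
    and sc: "\<And>i j c x. i < n \<Longrightarrow> j < n \<Longrightarrow> A i j (scaleC c x) = scaleC c (A i j x)"
    and form: "\<And>\<xi>. (\<Sum>i<n. \<Sum>j<n. cinner (A i j (\<xi> j)) (\<xi> i)) = 0"
    and "i0 < n" "j0 < n"
  shows "A i0 j0 a = 0"
proof -
  define B where "B \<xi> \<eta> = (\<Sum>i<n. \<Sum>j<n. cinner (A i j (\<xi> j)) (\<eta> i))" for \<xi> \<eta>
  have B_polar: "B (\<lambda>k. \<xi> k + scaleC t (\<eta> k)) (\<lambda>k. \<xi> k + scaleC t (\<eta> k))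
      = B \<xi> \<xi> + cnj t * B \<xi> \<eta> + t * B \<eta> \<xi> + t * cnj t * B \<eta> \<eta>" for \<xi> \<eta> t
    unfolding B_def
    by (simp add: add sc cinner_add_left cinner_add_right sum.distrib sum_distrib_left algebra_simps)
  have "B \<xi> \<eta> = 0" for \<xi> \<eta>
  proof -
    have "B \<xi> \<eta> + B \<eta> \<xi> = 0" "- \<i> * B \<xi> \<eta> + \<i> * B \<eta> \<xi> = 0"
      using B_polar[of \<xi> 1 \<eta>] B_polar[of \<xi> \<i> \<eta>] form by (simp_all add: B_def)
    then show ?thesis by (simp add: algebra_simps)
  qed
  moreover define b where "b = A i0 j0 a"
  have "B (\<lambda>k. if k = j0 then a else 0) (\<lambda>k. if k = i0 then b else 0) = cinner b b"
  proof -
    have A0: "A i j 0 = 0" if "i < n" "j < n" for i j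
      using add[OF that, of 0 0] by simp
    have "B (\<lambda>k. if k = j0 then a else 0) (\<lambda>k. if k = i0 then b else 0)
       = (\<Sum>i<n. \<Sum>j<n. if i = i0 then if j = j0 then cinner b b else 0 else 0)"
      unfolding B_def using A0 by (intro sum.cong refl) (auto simp: b_def)
    also have "\<dots> = (\<Sum>i<n. if i = i0 then cinner b b else 0)"
      using assms(5) by (intro sum.cong refl) simp
    also have "\<dots> = cinner b b" using assms(4) by simp
    finally show ?thesis .
  qed
  ultimately show ?thesis using cinner_eq_zero[of b] by (simp add: b_def)
qed

lemma sum_swap_pairs:
  "(\<Sum>i\<in>A. \<Sum>j\<in>B. \<Sum>k\<in>C. \<Sum>l\<in>D. G i j k l) = (\<Sum>k\<in>C. \<Sum>l\<in>D. \<Sum>i\<in>A. \<Sum>j\<in>B. G i j k l)"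
proof -
  have "(\<Sum>i\<in>A. \<Sum>j\<in>B. \<Sum>k\<in>C. \<Sum>l\<in>D. G i j k l) = (\<Sum>i\<in>A. \<Sum>k\<in>C. \<Sum>j\<in>B. \<Sum>l\<in>D. G i j k l)"
    by (intro sum.cong refl) (rule sum.swap)
  also have "\<dots> = (\<Sum>k\<in>C. \<Sum>i\<in>A. \<Sum>l\<in>D. \<Sum>j\<in>B. G i j k l)"
    by (subst sum.swap) (intro sum.cong refl sum.swap)
  also have "\<dots> = (\<Sum>k\<in>C. \<Sum>l\<in>D. \<Sum>i\<in>A. \<Sum>j\<in>B. G i j k l)"
    by (intro sum.cong refl) (rule sum.swap)
  finally show ?thesis .
qed

lemma op_add_assoc: "op_add (op_add a b) c = op_add a (op_add b c)"
  by (rule ext) (simp add: op_add_def add.assoc)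

lemma op_add_commute: "op_add a b = op_add b a"
  by (rule ext) (simp add: op_add_def add.commute)

lemma op_add_zero_left: "op_add op_zero a = a"
  by (rule ext) (simp add: op_add_def op_zero_def)

lemma op_add_zero_zero: "op_add op_zero op_zero = op_zero"
  by (simp add: op_add_zero_left)

lemma op_add_scale_minus_one: "op_add a (op_scale (-1) a) = op_zero"
  by (rule ext) (simp add: op_add_def op_scale_def op_zero_def)

lemma op_scale_add_right: "op_scale c (op_add a b) = op_add (op_scale c a) (op_scale c b)"
  by (rule ext) (simp add: op_add_def op_scale_def scaleC_add_right)

lemma op_scale_add_left: "op_scale (c + d) a = op_add (op_scale c a) (op_scale d a)"
  by (rule ext) (simp add: op_add_def op_scale_def scaleC_add_left)

lemma op_scale_scale: "op_scale c (op_scale d a) = op_scale (c * d) a"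
  by (rule ext) (simp add: op_scale_def)

lemma op_scale_one: "op_scale 1 a = a"
  by (rule ext) (simp add: op_scale_def)

lemma op_scale_zero: "op_scale c op_zero = op_zero"
  by (rule ext) (simp add: op_scale_def op_zero_def)

lemma op_diff_eq: "op_add x (op_scale (-1) y) = (\<lambda>\<xi>. x \<xi> - y \<xi>)"
  by (rule ext) (simp add: op_add_def op_scale_def)

lemma vsum_op_add_apply: "vsum op_add op_zero g n \<xi> = (\<Sum>i<n. g i \<xi>)"
  by (induct n) (simp_all add: op_add_def op_zero_def)

lemma conj_mat_apply:
  "k < m \<Longrightarrow> l < m \<Longrightarrow> conj_mat op_add op_scale op_zero n m \<alpha> X k l x
     = (\<Sum>i<n. \<Sum>j<n. scaleC (cnj (\<alpha> i k) * \<alpha> j l) (X i j x))"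
  by (simp add: conj_mat_def vsum_op_add_apply op_scale_def)

section \<open>Cosets modulo a subspace of operators\<close>

locale op_subspace =
  fixes J :: "('h::complex_hilbert \<Rightarrow> 'h) set"
  assumes subspace_zero: "op_zero \<in> J"
    and subspace_add: "x \<in> J \<Longrightarrow> y \<in> J \<Longrightarrow> op_add x y \<in> J"
    and subspace_scale: "x \<in> J \<Longrightarrow> op_scale c x \<in> J"
begin

lemma subspace_diff: "x \<in> J \<Longrightarrow> y \<in> J \<Longrightarrow> (\<lambda>\<xi>. x \<xi> - y \<xi>) \<in> J"
  using subspace_add[OF _ subspace_scale, of x y "-1"] by (simp only: op_diff_eq)

lemma mem_coset_iff: "b \<in> coset J a \<longleftrightarrow> (\<lambda>\<xi>. b \<xi> - a \<xi>) \<in> J"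
proof -
  have "b = op_add a j \<longleftrightarrow> j = (\<lambda>\<xi>. b \<xi> - a \<xi>)" for j
    by (auto simp: op_add_def fun_eq_iff)
  then show ?thesis by (auto simp: coset_def)
qed

lemma coset_self: "a \<in> coset J a"
  using subspace_zero by (simp add: mem_coset_iff op_zero_def)

lemma coset_eq_iff: "coset J a = coset J b \<longleftrightarrow> (\<lambda>\<xi>. a \<xi> - b \<xi>) \<in> J"
proof
  assume "coset J a = coset J b"
  then show "(\<lambda>\<xi>. a \<xi> - b \<xi>) \<in> J" using coset_self mem_coset_iff by blast
next
  assume ab: "(\<lambda>\<xi>. a \<xi> - b \<xi>) \<in> J"
  have "(\<lambda>\<xi>. x \<xi> - a \<xi>) \<in> J \<longleftrightarrow> (\<lambda>\<xi>. x \<xi> - b \<xi>) \<in> J" for x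
  proof
    assume "(\<lambda>\<xi>. x \<xi> - a \<xi>) \<in> J"
    from subspace_add[OF this ab] show "(\<lambda>\<xi>. x \<xi> - b \<xi>) \<in> J" by (simp add: op_add_def)
  next
    assume "(\<lambda>\<xi>. x \<xi> - b \<xi>) \<in> J"
    from subspace_diff[OF this ab] show "(\<lambda>\<xi>. x \<xi> - a \<xi>) \<in> J" by simp
  qed
  then show "coset J a = coset J b" by (auto simp: mem_coset_iff)
qed

lemma qrep_coset_diff: "(\<lambda>\<xi>. qrep (coset J a) \<xi> - a \<xi>) \<in> J"
  unfolding qrep_def using someI[of "\<lambda>x. x \<in> coset J a", OF coset_self] mem_coset_iff by blast

lemma coset_qrep: "coset J (qrep (coset J a)) = coset J a"
  using qrep_coset_diff coset_eq_iff by blast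

lemma qadd_coset: "qadd J (coset J a) (coset J b) = coset J (op_add a b)"
  using subspace_add[OF qrep_coset_diff[of a] qrep_coset_diff[of b]]
  by (simp add: qadd_def coset_eq_iff op_add_def algebra_simps)

lemma qscale_coset: "qscale J c (coset J a) = coset J (op_scale c a)"
  using subspace_scale[OF qrep_coset_diff[of a], of c]
  by (simp add: qscale_def coset_eq_iff op_scale_def scaleC_diff_right)

lemma vsum_coset:
  "vsum (qadd J) (coset J op_zero) (\<lambda>i. coset J (g i)) n = coset J (vsum op_add op_zero g n)"
  by (induct n) (simp_all add: qadd_coset)

lemma conj_mat_coset:
  "conj_mat (qadd J) (qscale J) (coset J op_zero) n m \<alpha> (\<lambda>i j. coset J (X i j))
     = (\<lambda>k l. coset J (conj_mat op_add op_scale op_zero n m \<alpha> X k l))"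
  by (intro ext) (simp add: conj_mat_def qscale_coset vsum_coset)

end

section \<open>The kernel of the compression by p\<close>

definition compr_form :: "('h::complex_hilbert \<Rightarrow> 'h) \<Rightarrow> nat \<Rightarrow> (nat \<Rightarrow> nat \<Rightarrow> 'h \<Rightarrow> 'h)
     \<Rightarrow> (nat \<Rightarrow> 'h) \<Rightarrow> complex" where
  "compr_form p n X \<xi> = (\<Sum>i<n. \<Sum>j<n. cinner ((p \<circ> X i j \<circ> p) (\<xi> j)) (\<xi> i))"

lemma Cp_iff: "X \<in> Cp V p n \<longleftrightarrow> X \<in> matc V op_zero n \<and> herm adj n X \<and>
   (\<forall>\<xi>. Im (compr_form p n X \<xi>) = 0 \<and> Re (compr_form p n X \<xi>) \<ge> 0)"
  by (simp add: Cp_def compr_form_def Let_def)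

locale opsys_projection =
  fixes V :: "('h::complex_hilbert \<Rightarrow> 'h) set" and p :: "'h \<Rightarrow> 'h"
  assumes opsys: "concrete_opsys V" and p_in_V: "p \<in> V" and projection: "is_projection p"
begin

lemma V_BH: "x \<in> V \<Longrightarrow> x \<in> BH"
  using opsys by (auto simp: concrete_opsys_def)

lemma V_add: "x \<in> V \<Longrightarrow> y \<in> V \<Longrightarrow> op_add x y \<in> V"
  using opsys by (auto simp: concrete_opsys_def)

lemma V_scale: "x \<in> V \<Longrightarrow> op_scale c x \<in> V"
  using opsys by (auto simp: concrete_opsys_def)

lemma V_zero: "op_zero \<in> V"
  using opsys by (auto simp: concrete_opsys_def)

lemma V_adj: "x \<in> V \<Longrightarrow> adj x \<in> V"
  using opsys by (auto simp: concrete_opsys_def)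

lemma vsum_in_V: "(\<And>i. i < n \<Longrightarrow> g i \<in> V) \<Longrightarrow> vsum op_add op_zero g n \<in> V"
  by (induct n) (simp_all add: V_zero V_add)

lemma p_BH: "p \<in> BH"
  using projection by (simp add: is_projection_def)

lemma adj_p: "adj p = p"
  using projection by (simp add: is_projection_def)

lemma p_idem: "p (p x) = p x"
  using projection by (metis comp_apply is_projection_def)

lemma cinner_p: "cinner (p x) y = cinner x (p y)"
  using cinner_adj_right[OF p_BH] adj_p by simp

lemma cinner_p_self: "cinner (p x) x = complex_of_real (sqnorm (p x))"
  by (metis cinner_p cinner_self p_idem)

definition compr_ker :: "('h \<Rightarrow> 'h) set" where
  "compr_ker = {x \<in> V. \<forall>\<xi>. p (x (p \<xi>)) = 0}"

lemma compr_ker_zero: "op_zero \<in> compr_ker"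
proof -
  have "p (op_zero (p \<xi>)) = 0" for \<xi> by (simp add: op_zero_def BH_zero[OF p_BH])
  then show ?thesis using V_zero by (simp add: compr_ker_def)
qed

lemma compr_ker_add:
  assumes "x \<in> compr_ker" "y \<in> compr_ker"
  shows "op_add x y \<in> compr_ker"
proof -
  have "p (op_add x y (p \<xi>)) = p (x (p \<xi>)) + p (y (p \<xi>))" for \<xi>
    by (simp add: op_add_def BH_add[OF p_BH])
  then show ?thesis using assms V_add by (simp add: compr_ker_def)
qed

lemma compr_ker_scale:
  assumes "x \<in> compr_ker"
  shows "op_scale c x \<in> compr_ker"
proof -
  have "p (op_scale c x (p \<xi>)) = scaleC c (p (x (p \<xi>)))" for \<xi>
    by (simp add: op_scale_def BH_scaleC[OF p_BH])
  then show ?thesis using assms V_scale by (simp add: compr_ker_def)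
qed

lemma compr_ker_adj:
  assumes x: "x \<in> compr_ker"
  shows "adj x \<in> compr_ker"
proof -
  have xV: "x \<in> V" and pxp: "\<And>\<xi>. p (x (p \<xi>)) = 0" using x by (auto simp: compr_ker_def)
  have "p (adj x (p \<xi>)) = 0" for \<xi>
  proof (rule cinner_ext)
    fix w
    have "cinner w (p (adj x (p \<xi>))) = cinner (p w) (adj x (p \<xi>))"
      by (simp add: cinner_p)
    also have "\<dots> = cinner (x (p w)) (p \<xi>)"
      by (simp add: cinner_adj_right[OF V_BH[OF xV]])
    also have "\<dots> = cinner (p (x (p w))) \<xi>"
      by (simp add: cinner_p)
    finally show "cinner w (p (adj x (p \<xi>))) = cinner w 0" by (simp add: pxp)
  qed
  then show ?thesis using V_adj[OF xV] by (simp add: compr_ker_def)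
qed

lemma C1_iff: "x \<in> C1 V p \<longleftrightarrow> x \<in> V \<and> adj x = x \<and>
   (\<forall>v. Im (cinner (p (x (p v))) v) = 0 \<and> Re (cinner (p (x (p v))) v) \<ge> 0)"
proof -
  have all_fun: "(\<forall>\<xi>::nat \<Rightarrow> 'h. Q (\<xi> 0)) \<longleftrightarrow> (\<forall>v. Q v)" for Q
  proof (intro iffI allI)
    fix v assume "\<forall>\<xi>::nat \<Rightarrow> 'h. Q (\<xi> 0)"
    from this[rule_format, of "\<lambda>_. v"] show "Q v" by simp
  qed simp
  have "(\<lambda>i j. if i = 0 \<and> j = 0 then x else op_zero) \<in> matc V op_zero 1 \<longleftrightarrow> x \<in> V"
    by (auto simp: matc_def V_zero)
  then show ?thesis
    using all_fun[of "\<lambda>v. Im (cinner (p (x (p v))) v) = 0 \<and> 0 \<le> Re (cinner (p (x (p v))) v)"]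
    by (simp add: C1_def Cp_def Let_def herm_def)
qed

lemma C1_neg_C1_subset_compr_ker: "C1 V p \<inter> op_scale (-1) ` C1 V p \<subseteq> compr_ker"
proof
  fix a assume "a \<in> C1 V p \<inter> op_scale (-1) ` C1 V p"
  then obtain b where a: "a \<in> C1 V p" and b: "b \<in> C1 V p" and ab: "a = op_scale (-1) b" by blast
  have aV: "a \<in> V" using a by (simp add: C1_iff)
  have a_pos: "\<forall>v. Im (cinner (p (a (p v))) v) = 0 \<and> 0 \<le> Re (cinner (p (a (p v))) v)"
    using a by (simp add: C1_iff)
  have b_pos: "\<forall>v. 0 \<le> Re (cinner (p (b (p v))) v)"
    using b by (simp add: C1_iff)
  have form: "cinner (p (a (p v))) v = 0" for v
  proof -
    have "cinner (p (a (p v))) v = - cinner (p (b (p v))) v"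
      by (simp add: ab op_scale_def BH_minus[OF p_BH])
    then show ?thesis using a_pos[rule_format, of v] b_pos[rule_format, of v]
      by (simp add: complex_eq_iff)
  qed
  have "p (a (p w)) = 0" for w
    using op_matrix_eq_0_of_form_eq_0[of 1 "\<lambda>_ _ v. p (a (p v))" 0 0 w]
    by (simp add: form BH_add[OF p_BH] BH_add[OF V_BH[OF aV]]
        BH_scaleC[OF p_BH] BH_scaleC[OF V_BH[OF aV]])
  then show "a \<in> compr_ker" using aV by (simp add: compr_ker_def)
qed

lemma Jp_subset_compr_ker: "Jp V p \<subseteq> compr_ker"
proof
  fix T assume "T \<in> Jp V p"
  then obtain k :: nat and c a where a: "\<forall>i<k. a i \<in> C1 V p \<inter> op_scale (-1) ` C1 V p"
    and T: "T = (\<lambda>x. \<Sum>i<k. scaleC (c i) (a i x))"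
    unfolding Jp_def cspan_def by blast
  have "T = vsum op_add op_zero (\<lambda>i. op_scale (c i) (a i)) k"
    by (rule ext) (simp add: T vsum_op_add_apply op_scale_def)
  also have "\<dots> \<in> compr_ker"
    using a C1_neg_C1_subset_compr_ker
    by (induct k) (auto simp: compr_ker_zero intro!: compr_ker_add compr_ker_scale)
  finally show "T \<in> compr_ker" .
qed

lemma selfadjoint_compr_ker_in_C1_neg_C1:
  assumes h: "h \<in> compr_ker" "adj h = h"
  shows "h \<in> C1 V p \<inter> op_scale (-1) ` C1 V p"
proof -
  have in_C1: "g \<in> C1 V p" if "g \<in> compr_ker" "adj g = g" for g
    using that by (simp add: C1_iff compr_ker_def)
  have "h \<in> V" using h(1) by (simp add: compr_ker_def)
  then have "op_scale (-1) h \<in> C1 V p"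
    using in_C1[OF compr_ker_scale[OF h(1)]] h(2) by (simp add: adj_op_scale V_BH)
  moreover have "h = op_scale (-1) (op_scale (-1) h)" by (simp add: op_scale_scale op_scale_one)
  ultimately show ?thesis using in_C1[OF h] by blast
qed

lemma compr_ker_subset_Jp: "compr_ker \<subseteq> Jp V p"
proof
  fix x assume x: "x \<in> compr_ker"
  then have xV: "x \<in> V" by (simp add: compr_ker_def)
  define re where "re = op_scale (1/2) (op_add x (adj x))"
  define im where "im = op_scale (- \<i>/2) (op_add x (op_scale (-1) (adj x)))"
  have in_ker: "re \<in> compr_ker" "im \<in> compr_ker"
    unfolding re_def im_def by (intro compr_ker_scale compr_ker_add compr_ker_adj x)+
  have "adj re = op_scale (1/2) (op_add (adj x) x)"
    unfolding re_def using xV by (simp add: adj_op_scale adj_op_add V_BH V_add V_adj adj_adj)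
  then have "adj re = re" by (simp add: re_def op_add_commute)
  have "adj im = op_scale (\<i>/2) (op_add (adj x) (op_scale (-1) x))"
    unfolding im_def using xV by (simp add: adj_op_scale adj_op_add V_BH V_add V_scale V_adj adj_adj)
  then have "adj im = im"
    by (simp add: im_def fun_eq_iff op_scale_def op_add_def scaleC_diff_right)
  have parts: "re \<in> C1 V p \<inter> op_scale (-1) ` C1 V p" "im \<in> C1 V p \<inter> op_scale (-1) ` C1 V p"
    using selfadjoint_compr_ker_in_C1_neg_C1 in_ker \<open>adj re = re\<close> \<open>adj im = im\<close> by blast+
  define c :: "nat \<Rightarrow> complex" where "c i = (if i = 0 then 1 else \<i>)" for i
  define a where "a i = (if i = 0 then re else im)" for i :: nat
  have "x = (\<lambda>\<xi>. \<Sum>i<2. scaleC (c i) (a i \<xi>))"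
  proof
    fix \<xi>
    have "scaleC (1/2) (x \<xi> + adj x \<xi>) + scaleC (1/2) (x \<xi> - adj x \<xi>) = scaleC (1/2 + 1/2) (x \<xi>)"
      by (simp only: scaleC_add_left scaleC_diff_right scaleC_add_right) (simp add: algebra_simps)
    then show "x \<xi> = (\<Sum>i<2. scaleC (c i) (a i \<xi>))"
      by (simp add: numeral_2_eq_2 a_def c_def re_def im_def op_scale_def op_add_def)
  qed
  moreover have "\<forall>i<2. a i \<in> C1 V p \<inter> op_scale (-1) ` C1 V p"
    using parts by (simp add: a_def)
  ultimately show "x \<in> Jp V p"
    unfolding Jp_def cspan_def by (intro CollectI exI[of _ 2] exI[of _ c] exI[of _ a] conjI)
qed

lemma Jp_eq_compr_ker: "Jp V p = compr_ker"
  using Jp_subset_compr_ker compr_ker_subset_Jp by blast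

abbreviation J where "J \<equiv> Jp V p"

lemma Jp_iff: "x \<in> J \<longleftrightarrow> x \<in> V \<and> (\<forall>\<xi>. p (x (p \<xi>)) = 0)"
  by (simp add: Jp_eq_compr_ker compr_ker_def)

sublocale Jp: op_subspace J
  by unfold_locales (simp_all add: Jp_eq_compr_ker compr_ker_zero compr_ker_add compr_ker_scale)

section \<open>The quotient operator system\<close>

lemma qstar_coset:
  assumes aV: "a \<in> V"
  shows "qstar J (coset J a) = coset J (adj a)"
proof -
  define d where "d = (\<lambda>\<xi>. qrep (coset J a) \<xi> - a \<xi>)"
  have dJ: "d \<in> J" unfolding d_def by (rule Jp.qrep_coset_diff)
  then have dV: "d \<in> V" by (simp add: Jp_iff)
  have "qrep (coset J a) = op_add a d" by (rule ext) (simp add: op_add_def d_def)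
  then have "adj (qrep (coset J a)) = op_add (adj a) (adj d)"
    using aV dV by (simp add: adj_op_add V_BH)
  moreover have "adj d \<in> J" using dJ compr_ker_adj by (simp add: Jp_eq_compr_ker)
  ultimately show ?thesis by (simp add: qstar_def Jp.coset_eq_iff op_add_def)
qed

lemma quot_ball: "(\<forall>x\<in>quot V J. P x) \<longleftrightarrow> (\<forall>a\<in>V. P (coset J a))"
  by (auto simp: quot_def)

lemma coset_in_quot: "a \<in> V \<Longrightarrow> coset J a \<in> quot V J"
  by (auto simp: quot_def)

lemma qrep_quot:
  assumes "A \<in> quot V J"
  shows "qrep A \<in> V" "coset J (qrep A) = A"
proof -
  obtain a where a: "a \<in> V" "A = coset J a" using assms by (auto simp: quot_def)
  have "(\<lambda>\<xi>. qrep A \<xi> - a \<xi>) \<in> V" using Jp.qrep_coset_diff[of a] a by (simp add: Jp_iff)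
  from V_add[OF a(1) this] show "qrep A \<in> V" by (simp add: op_add_def)
  show "coset J (qrep A) = A" using a Jp.coset_qrep by simp
qed

lemma quot_cvector_space: "cvector_space (quot V J) (qadd J) (qscale J) (coset J op_zero)"
proof -
  have inv: "\<forall>a\<in>V. \<exists>b\<in>V. coset J (op_add a b) = coset J op_zero"
    by (metis V_scale op_add_scale_minus_one)
  have comm: "\<forall>a\<in>V. \<forall>b\<in>V. coset J (op_add a b) = coset J (op_add b a)"
    by (simp add: op_add_commute)
  have "(\<exists>x\<in>quot V J. P x) \<longleftrightarrow> (\<exists>a\<in>V. P (coset J a))" for P
    by (auto simp: quot_def)
  then show ?thesis
    unfolding cvector_space_def quot_ball
    by (simp add: coset_in_quot V_zero V_add V_scale Jp.qadd_coset Jp.qscale_coset op_add_assoc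
        op_add_zero_left op_scale_add_right op_scale_add_left op_scale_scale op_scale_one inv comm)
qed

lemma quot_star_vector_space:
  "star_vector_space (quot V J) (qadd J) (qscale J) (coset J op_zero) (qstar J)"
  unfolding star_vector_space_def quot_ball
  by (simp add: quot_cvector_space qstar_coset coset_in_quot V_adj adj_adj V_BH V_add V_scale
      Jp.qadd_coset Jp.qscale_coset adj_op_add adj_op_scale)

lemma compr_form_cong:
  assumes "\<And>i j v. i < n \<Longrightarrow> j < n \<Longrightarrow> p (X i j (p v)) = p (Y i j (p v))"
  shows "compr_form p n X \<xi> = compr_form p n Y \<xi>"
  unfolding compr_form_def using assms by (intro sum.cong refl) simp

lemma compr_form_add:
  "compr_form p n (\<lambda>i j. op_add (X i j) (Y i j)) \<xi> = compr_form p n X \<xi> + compr_form p n Y \<xi>"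
  unfolding compr_form_def by (simp add: op_add_def BH_add[OF p_BH] cinner_add_left sum.distrib)

lemma compr_form_scale: "compr_form p n (\<lambda>i j. op_scale c (X i j)) \<xi> = c * compr_form p n X \<xi>"
  unfolding compr_form_def by (simp add: op_scale_def BH_scaleC[OF p_BH] sum_distrib_left)

lemma compr_form_diag_p:
  "compr_form p n (\<lambda>i j. if i = j then p else op_zero) \<xi> = complex_of_real (\<Sum>i<n. sqnorm (p (\<xi> i)))"
proof -
  have "cinner ((p \<circ> (if i = j then p else op_zero) \<circ> p) (\<xi> j)) (\<xi> i)
      = (if i = j then complex_of_real (sqnorm (p (\<xi> i))) else 0)" for i j
    by (simp add: p_idem cinner_p_self op_zero_def BH_zero[OF p_BH])
  then show ?thesis by (simp add: compr_form_def)
qed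

lemma compr_form_real:
  assumes XV: "\<And>i j. i < n \<Longrightarrow> j < n \<Longrightarrow> X i j \<in> V" and "herm adj n X"
  shows "Im (compr_form p n X \<xi>) = 0"
proof -
  define F where "F i j = cinner (p (X i j (p (\<xi> j)))) (\<xi> i)" for i j
  have "cnj (F i j) = F j i" if ij: "i < n" "j < n" for i j
  proof -
    have "cnj (F i j) = cinner (p (\<xi> i)) (X i j (p (\<xi> j)))"
      by (simp add: F_def cinner_commute[of "\<xi> i"] cinner_p)
    also have "\<dots> = cinner (adj (X i j) (p (\<xi> i))) (p (\<xi> j))"
      by (simp add: cinner_adj_left[OF V_BH[OF XV[OF ij]]])
    also have "\<dots> = F j i" using assms(2) ij by (simp add: herm_def F_def cinner_p)
    finally show ?thesis .
  qed
  then have "cnj (compr_form p n X \<xi>) = (\<Sum>i<n. \<Sum>j<n. F j i)"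
    by (simp add: compr_form_def F_def[symmetric])
  also have "\<dots> = compr_form p n X \<xi>"
    by (subst sum.swap) (simp add: compr_form_def F_def)
  finally show ?thesis by (metis Reals_cnj_iff complex_is_Real_iff)
qed

lemma compr_form_bound:
  assumes XV: "\<And>i j. i < n \<Longrightarrow> j < n \<Longrightarrow> X i j \<in> V"
  shows "\<exists>C\<ge>0. \<forall>\<xi>. cmod (compr_form p n X \<xi>) \<le> C * (\<Sum>i<n. sqnorm (p (\<xi> i)))"
proof -
  define K where "K i j = (SOME K. K \<ge> 0 \<and> (\<forall>x. hnorm (X i j x) \<le> K * hnorm x))" for i j
  have K: "K i j \<ge> 0" "hnorm (X i j x) \<le> K i j * hnorm x" if "i < n" "j < n" for i j x
    unfolding K_def using someI_ex[OF BH_bound[OF V_BH[OF XV[OF that]]]] by blast+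
  define C where "C = 2 * (\<Sum>i<n. \<Sum>j<n. K i j)"
  have "C \<ge> 0" unfolding C_def using K(1) by (auto intro!: sum_nonneg)
  moreover have "cmod (compr_form p n X \<xi>) \<le> C * (\<Sum>i<n. sqnorm (p (\<xi> i)))" for \<xi>
  proof -
    define S where "S = (\<Sum>i<n. sqnorm (p (\<xi> i)))"
    have S: "sqnorm (p (\<xi> i)) \<le> S" if "i < n" for i
      unfolding S_def using that sqnorm_nonneg by (intro member_le_sum) auto
    have entry: "cmod (cinner ((p \<circ> X i j \<circ> p) (\<xi> j)) (\<xi> i)) \<le> K i j * (2 * S)"
      if ij: "i < n" "j < n" for i j
    proof -
      have "cmod (cinner ((p \<circ> X i j \<circ> p) (\<xi> j)) (\<xi> i)) = cmod (cinner (X i j (p (\<xi> j))) (p (\<xi> i)))"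
        by (simp add: cinner_p)
      also have "\<dots> \<le> hnorm (X i j (p (\<xi> j))) * hnorm (p (\<xi> i))" by (rule Cauchy_Schwarz)
      also have "\<dots> \<le> K i j * (hnorm (p (\<xi> j)) * hnorm (p (\<xi> i)))"
        using K[OF ij] hnorm_nonneg mult_right_mono by (metis mult.assoc)
      also have "\<dots> \<le> K i j * (sqnorm (p (\<xi> j)) + sqnorm (p (\<xi> i)))"
        using hnorm_mult_le_sqnorm_add K(1)[OF ij] by (rule mult_left_mono)
      also have "\<dots> \<le> K i j * (2 * S)"
        using K(1)[OF ij] S[OF ij(1)] S[OF ij(2)] by (intro mult_left_mono) auto
      finally show ?thesis .
    qed
    have "cmod (compr_form p n X \<xi>) \<le> (\<Sum>i<n. \<Sum>j<n. cmod (cinner ((p \<circ> X i j \<circ> p) (\<xi> j)) (\<xi> i)))"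
      unfolding compr_form_def by (rule order_trans[OF norm_sum sum_mono[OF norm_sum]])
    also have "\<dots> \<le> (\<Sum>i<n. \<Sum>j<n. K i j * (2 * S))"
      using entry by (intro sum_mono) auto
    also have "\<dots> = C * S" by (simp add: C_def sum_distrib_right sum_distrib_left mult_ac)
    finally show ?thesis by (simp add: S_def)
  qed
  ultimately show ?thesis by blast
qed

lemma herm_matc_add:
  assumes "X \<in> matc V op_zero n" "herm adj n X" "Y \<in> matc V op_zero n" "herm adj n Y"
  shows "(\<lambda>i j. op_add (X i j) (Y i j)) \<in> matc V op_zero n"
    and "herm adj n (\<lambda>i j. op_add (X i j) (Y i j))"
  using assms by (auto simp: matc_def herm_def V_add op_add_zero_zero adj_op_add V_BH)

lemma herm_matc_scale_real:
  assumes "X \<in> matc V op_zero n" "herm adj n X"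
  shows "(\<lambda>i j. op_scale (complex_of_real r) (X i j)) \<in> matc V op_zero n"
    and "herm adj n (\<lambda>i j. op_scale (complex_of_real r) (X i j))"
  using assms by (auto simp: matc_def herm_def V_scale op_scale_zero adj_op_scale V_BH)

lemma Cp_add: "X \<in> Cp V p n \<Longrightarrow> Y \<in> Cp V p n \<Longrightarrow> (\<lambda>i j. op_add (X i j) (Y i j)) \<in> Cp V p n"
  by (simp add: Cp_iff herm_matc_add compr_form_add)

lemma Cp_scale: "X \<in> Cp V p n \<Longrightarrow> r \<ge> 0 \<Longrightarrow> (\<lambda>i j. op_scale (complex_of_real r) (X i j)) \<in> Cp V p n"
  by (simp add: Cp_iff herm_matc_scale_real compr_form_scale)

lemma compr_form_conj_mat:
  assumes XB: "\<And>i j. i < n \<Longrightarrow> j < n \<Longrightarrow> X i j \<in> BH"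
  shows "compr_form p m (conj_mat op_add op_scale op_zero n m \<alpha> X) \<xi>
     = compr_form p n X (\<lambda>j. \<Sum>l<m. scaleC (\<alpha> j l) (\<xi> l))"
proof -
  define G where "G i j k l = (cnj (\<alpha> i k) * \<alpha> j l) * cinner (p (X i j (p (\<xi> l)))) (\<xi> k)"
    for i j k l
  have "compr_form p m (conj_mat op_add op_scale op_zero n m \<alpha> X) \<xi>
      = (\<Sum>k<m. \<Sum>l<m. \<Sum>i<n. \<Sum>j<n. G i j k l)"
    unfolding compr_form_def G_def
    by (intro sum.cong refl) (simp add: conj_mat_apply BH_sum[OF p_BH] BH_scaleC[OF p_BH] cinner_sum_left)
  also have "\<dots> = (\<Sum>i<n. \<Sum>j<n. \<Sum>k<m. \<Sum>l<m. G i j k l)"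
    by (rule sum_swap_pairs[symmetric])
  also have "\<dots> = compr_form p n X (\<lambda>j. \<Sum>l<m. scaleC (\<alpha> j l) (\<xi> l))"
    unfolding compr_form_def G_def
    by (intro sum.cong refl) (simp add: XB BH_sum BH_scaleC p_BH cinner_sum_left cinner_sum_right
        sum_distrib_left algebra_simps)
  finally show ?thesis .
qed

lemma Cp_conj_mat:
  assumes X: "X \<in> Cp V p n"
  shows "conj_mat op_add op_scale op_zero n m \<alpha> X \<in> Cp V p m"
proof -
  let ?E = "conj_mat op_add op_scale op_zero n m \<alpha> X"
  have XV: "\<And>i j. i < n \<Longrightarrow> j < n \<Longrightarrow> X i j \<in> V" using X by (simp add: Cp_iff matc_def)
  then have XB: "\<And>i j. i < n \<Longrightarrow> j < n \<Longrightarrow> X i j \<in> BH" using V_BH by blast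
  have Xh: "\<And>i j. i < n \<Longrightarrow> j < n \<Longrightarrow> adj (X i j) = X j i" using X by (simp add: Cp_iff herm_def)
  have "?E \<in> matc V op_zero m"
    unfolding matc_def conj_mat_def using XV by (auto intro!: vsum_in_V V_scale)
  moreover have "adj (?E k l) = ?E l k" if kl: "k < m" "l < m" for k l
  proof (rule adj_eqI)
    fix x y
    have "cinner (?E k l x) y = (\<Sum>i<n. \<Sum>j<n. (cnj (\<alpha> i k) * \<alpha> j l) * cinner x (X j i y))"
      using kl by (simp add: conj_mat_apply cinner_sum_left cinner_adj_right XB Xh)
    also have "\<dots> = (\<Sum>j<n. \<Sum>i<n. (cnj (\<alpha> i k) * \<alpha> j l) * cinner x (X j i y))"
      by (rule sum.swap)
    also have "\<dots> = cinner x (?E l k y)"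
      using kl by (simp add: conj_mat_apply cinner_sum_right mult.commute)
    finally show "cinner (?E k l x) y = cinner x (?E l k y)" .
  qed
  ultimately show ?thesis using X by (simp add: Cp_iff herm_def compr_form_conj_mat XB)
qed

(* C(p_n) only sees the compressions p x_ij p, and these are constant on cosets of J_p. *)
lemma Ctilde_coset_iff:
  assumes "X \<in> matc V op_zero n" "herm adj n X"
  shows "(\<lambda>i j. coset J (X i j)) \<in> Ctilde V p n \<longleftrightarrow> X \<in> Cp V p n"
proof
  assume "(\<lambda>i j. coset J (X i j)) \<in> Ctilde V p n"
  then obtain Z where Z: "Z \<in> Cp V p n" and cosets: "(\<lambda>i j. coset J (Z i j)) = (\<lambda>i j. coset J (X i j))"
    by (auto simp: Ctilde_def)
  have "compr_form p n X \<xi> = compr_form p n Z \<xi>" for \<xi>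
  proof (rule compr_form_cong)
    fix i j v
    have "coset J (X i j) = coset J (Z i j)" using cosets by (simp add: fun_eq_iff)
    then have "(\<lambda>\<xi>. X i j \<xi> - Z i j \<xi>) \<in> J" by (simp add: Jp.coset_eq_iff)
    then show "p (X i j (p v)) = p (Z i j (p v))" by (simp add: Jp_iff BH_diff[OF p_BH])
  qed
  then show "X \<in> Cp V p n" using assms Z by (simp add: Cp_iff)
qed (auto simp: Ctilde_def)

lemma Ctilde_herm: "Xt \<in> Ctilde V p n \<Longrightarrow> Xt \<in> matc (quot V J) (coset J op_zero) n \<and> herm (qstar J) n Xt"
  by (auto simp: Ctilde_def Cp_iff matc_def herm_def coset_in_quot qstar_coset)

lemma Ctilde_add:
  assumes "Xt \<in> Ctilde V p n" "Yt \<in> Ctilde V p n"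
  shows "(\<lambda>i j. qadd J (Xt i j) (Yt i j)) \<in> Ctilde V p n"
proof -
  obtain X Y where "X \<in> Cp V p n" "Y \<in> Cp V p n"
    and "Xt = (\<lambda>i j. coset J (X i j))" "Yt = (\<lambda>i j. coset J (Y i j))"
    using assms by (auto simp: Ctilde_def)
  then show ?thesis using Cp_add unfolding Ctilde_def by (auto simp: Jp.qadd_coset)
qed

lemma Ctilde_scale:
  assumes "Xt \<in> Ctilde V p n" "r \<ge> 0"
  shows "(\<lambda>i j. qscale J (complex_of_real r) (Xt i j)) \<in> Ctilde V p n"
proof -
  obtain X where "X \<in> Cp V p n" "Xt = (\<lambda>i j. coset J (X i j))"
    using assms by (auto simp: Ctilde_def)
  then show ?thesis using Cp_scale assms(2) unfolding Ctilde_def by (auto simp: Jp.qscale_coset)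
qed

lemma Ctilde_conj_mat:
  assumes "Xt \<in> Ctilde V p n"
  shows "conj_mat (qadd J) (qscale J) (coset J op_zero) n m \<alpha> Xt \<in> Ctilde V p m"
proof -
  obtain X where "X \<in> Cp V p n" "Xt = (\<lambda>i j. coset J (X i j))"
    using assms by (auto simp: Ctilde_def)
  then show ?thesis using Cp_conj_mat unfolding Ctilde_def by (auto simp: Jp.conj_mat_coset)
qed

lemma Ctilde_antisym:
  assumes Xt: "Xt \<in> Ctilde V p n" and neg: "(\<lambda>i j. qscale J (-1) (Xt i j)) \<in> Ctilde V p n"
  shows "Xt = (\<lambda>i j. coset J op_zero)"
proof -
  obtain X where X: "X \<in> Cp V p n" and Xt_eq: "Xt = (\<lambda>i j. coset J (X i j))"
    using Xt by (auto simp: Ctilde_def)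
  have Xm: "X \<in> matc V op_zero n" and Xh: "herm adj n X" using X by (simp_all add: Cp_iff)
  then have XV: "\<And>i j. i < n \<Longrightarrow> j < n \<Longrightarrow> X i j \<in> V" by (simp add: matc_def)
  let ?negX = "\<lambda>i j. op_scale (complex_of_real (-1)) (X i j)"
  have "(\<lambda>i j. coset J (?negX i j)) \<in> Ctilde V p n"
    using neg by (simp add: Xt_eq Jp.qscale_coset)
  then have "?negX \<in> Cp V p n"
    using Ctilde_coset_iff[OF herm_matc_scale_real[OF Xm Xh]] by blast
  then have "0 \<le> Re (compr_form p n ?negX \<xi>)" for \<xi> by (simp add: Cp_iff)
  moreover have "Im (compr_form p n X \<xi>) = 0 \<and> 0 \<le> Re (compr_form p n X \<xi>)" for \<xi>
    using X by (simp add: Cp_iff)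
  ultimately have form: "compr_form p n X \<xi> = 0" for \<xi>
    by (simp add: compr_form_scale complex_eq_iff antisym)
  have pXp: "p (X i j (p v)) = 0" if "i < n" "j < n" for i j v
    using op_matrix_eq_0_of_form_eq_0[of n "\<lambda>i j v. p (X i j (p v))", OF _ _ _ that] form XV
    by (simp add: compr_form_def BH_add BH_scaleC p_BH V_BH)
  show ?thesis
  proof (intro ext)
    fix i j
    show "Xt i j = coset J op_zero"
    proof (cases "i < n \<and> j < n")
      case True
      then show ?thesis using XV pXp by (simp add: Xt_eq Jp.coset_eq_iff Jp_iff op_zero_def)
    next
      case False
      then show ?thesis using X by (simp add: Xt_eq Cp_iff matc_def)
    qed
  qed
qed

lemma quot_proper_matrix_ordering:
  "proper_matrix_ordering (quot V J) (qadd J) (qscale J) (coset J op_zero) (qstar J) (Ctilde V p)"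
  unfolding proper_matrix_ordering_def
proof (intro conjI)
  show "\<forall>n\<ge>1. Ctilde V p n \<subseteq> {X \<in> matc (quot V J) (coset J op_zero) n. herm (qstar J) n X}"
    using Ctilde_herm by blast
  show "\<forall>n\<ge>1. \<forall>X\<in>Ctilde V p n. \<forall>Y\<in>Ctilde V p n. (\<lambda>i j. qadd J (X i j) (Y i j)) \<in> Ctilde V p n"
    using Ctilde_add by blast
  show "\<forall>n\<ge>1. \<forall>X\<in>Ctilde V p n. \<forall>r::real. r \<ge> 0 \<longrightarrow>
      (\<lambda>i j. qscale J (complex_of_real r) (X i j)) \<in> Ctilde V p n"
    using Ctilde_scale by blast
  show "\<forall>n\<ge>1. \<forall>m\<ge>1. \<forall>\<alpha>. \<forall>X\<in>Ctilde V p n.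
      conj_mat (qadd J) (qscale J) (coset J op_zero) n m \<alpha> X \<in> Ctilde V p m"
    using Ctilde_conj_mat by blast
  show "\<forall>n\<ge>1. \<forall>X\<in>Ctilde V p n. (\<lambda>i j. qscale J (-1) (X i j)) \<in> Ctilde V p n \<longrightarrow>
      X = (\<lambda>i j. coset J op_zero)"
    using Ctilde_antisym by blast
qed

lemma coset_average_adj:
  assumes "coset J (adj b) = coset J a"
  shows "coset J (op_scale (1/2) (op_add a (adj b))) = coset J a"
proof -
  have "(\<lambda>\<xi>. adj b \<xi> - a \<xi>) \<in> J" using assms by (simp add: Jp.coset_eq_iff)
  then have "op_scale (1/2) (\<lambda>\<xi>. adj b \<xi> - a \<xi>) \<in> J" by (rule Jp.subspace_scale)
  moreover have "op_scale (1/2) (\<lambda>\<xi>. adj b \<xi> - a \<xi>)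
      = (\<lambda>\<xi>. op_scale (1/2) (op_add a (adj b)) \<xi> - a \<xi>)"
    by (simp add: fun_eq_iff op_scale_def op_add_def scaleC_half_diff)
  ultimately show ?thesis by (simp add: Jp.coset_eq_iff)
qed

lemma quot_herm_lift:
  assumes Xm: "Xt \<in> matc (quot V J) (coset J op_zero) n" and Xh: "herm (qstar J) n Xt"
  obtains X where "X \<in> matc V op_zero n" "herm adj n X" "Xt = (\<lambda>i j. coset J (X i j))"
proof -
  define x where "x i j = qrep (Xt i j)" for i j
  have x: "x i j \<in> V" "coset J (x i j) = Xt i j" if "i < n" "j < n" for i j
    using Xm that qrep_quot unfolding x_def matc_def by auto
  have x_adj: "coset J (adj (x i j)) = coset J (x j i)" if "i < n" "j < n" for i j
  proof -
    have "qstar J (coset J (x i j)) = coset J (x j i)" using Xh that by (simp add: herm_def x)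
    then show ?thesis using x(1)[OF that] by (simp add: qstar_coset)
  qed
  define X where "X i j = (if i < n \<and> j < n then op_scale (1/2) (op_add (x i j) (adj (x j i)))
    else op_zero)" for i j
  have "X \<in> matc V op_zero n"
    using x by (simp add: matc_def X_def V_scale V_add V_adj)
  moreover have "herm adj n X"
    unfolding herm_def
  proof (intro allI impI)
    fix i j assume ij: "i < n" "j < n"
    have "adj (X i j) = op_scale (1/2) (op_add (adj (x i j)) (x j i))"
      using ij x[OF ij] x[OF ij(2,1)] by (simp add: X_def adj_op_scale adj_op_add V_BH V_add V_adj adj_adj)
    then show "adj (X i j) = X j i" using ij by (simp add: X_def op_add_commute)
  qed
  moreover have "Xt = (\<lambda>i j. coset J (X i j))"
  proof (intro ext)
    fix i j
    show "Xt i j = coset J (X i j)"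
    proof (cases "i < n \<and> j < n")
      case True
      then show ?thesis using x[of i j] x_adj[of j i] by (simp add: X_def coset_average_adj)
    next
      case False
      then show ?thesis using Xm by (auto simp: X_def matc_def)
    qed
  qed
  ultimately show ?thesis using that by blast
qed

definition unit_shift :: "nat \<Rightarrow> real \<Rightarrow> (nat \<Rightarrow> nat \<Rightarrow> 'h \<Rightarrow> 'h) \<Rightarrow> (nat \<Rightarrow> nat \<Rightarrow> 'h \<Rightarrow> 'h)" where
  "unit_shift n r X = (\<lambda>i j. if i < n \<and> j < n then
      op_add (op_scale (complex_of_real r) (if i = j then p else op_zero)) (X i j) else op_zero)"

lemma coset_unit_shift:
  assumes "X \<in> matc V op_zero n"
  shows "(\<lambda>i j. qadd J (qscale J (complex_of_real r) (unit_mat (coset J op_zero) (coset J p) n i j))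
              (coset J (X i j))) = (\<lambda>i j. coset J (unit_shift n r X i j))"
  using assms
  by (intro ext) (auto simp: unit_mat_def unit_shift_def matc_def Jp.qscale_coset Jp.qadd_coset
      op_scale_zero op_add_zero_zero)

lemma herm_matc_unit_shift:
  assumes "X \<in> matc V op_zero n" "herm adj n X"
  shows "unit_shift n r X \<in> matc V op_zero n" "herm adj n (unit_shift n r X)"
  using assms
  by (auto simp: matc_def herm_def unit_shift_def V_add V_scale p_in_V V_zero adj_op_add adj_op_scale
      adj_p adj_op_zero V_BH)

lemma compr_form_unit_shift:
  "compr_form p n (unit_shift n r X) \<xi> = complex_of_real (r * (\<Sum>i<n. sqnorm (p (\<xi> i)))) + compr_form p n X \<xi>"
proof -
  have "compr_form p n (unit_shift n r X) \<xi>
     = compr_form p n (\<lambda>i j. op_add (op_scale (complex_of_real r) (if i = j then p else op_zero)) (X i j)) \<xi>"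
    by (rule compr_form_cong) (simp add: unit_shift_def)
  then show ?thesis by (simp add: compr_form_add compr_form_scale compr_form_diag_p)
qed

lemma Cp_iff_Re_nonneg:
  assumes "X \<in> matc V op_zero n" "herm adj n X"
  shows "X \<in> Cp V p n \<longleftrightarrow> (\<forall>\<xi>. 0 \<le> Re (compr_form p n X \<xi>))"
  using assms compr_form_real[of n X] by (auto simp: Cp_iff matc_def)

lemma Ctilde_unit_shift_iff:
  assumes Xm: "X \<in> matc V op_zero n" and Xh: "herm adj n X"
  shows "(\<lambda>i j. coset J (unit_shift n r X i j)) \<in> Ctilde V p n
     \<longleftrightarrow> (\<forall>\<xi>. 0 \<le> r * (\<Sum>i<n. sqnorm (p (\<xi> i))) + Re (compr_form p n X \<xi>))"
  using Ctilde_coset_iff[OF herm_matc_unit_shift[OF Xm Xh]]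
    Cp_iff_Re_nonneg[OF herm_matc_unit_shift[OF Xm Xh]]
  by (simp add: compr_form_unit_shift)

lemma Ctilde_exists_unit_shift:
  assumes m: "X \<in> matc V op_zero n" and h: "herm adj n X"
  shows "\<exists>r>0. (\<lambda>i j. coset J (unit_shift n r X i j)) \<in> Ctilde V p n"
proof -
  have "\<exists>C\<ge>0. \<forall>\<xi>. cmod (compr_form p n X \<xi>) \<le> C * (\<Sum>i<n. sqnorm (p (\<xi> i)))"
    using m by (intro compr_form_bound) (simp add: matc_def)
  then obtain C where C: "C \<ge> 0" "\<And>\<xi>. cmod (compr_form p n X \<xi>) \<le> C * (\<Sum>i<n. sqnorm (p (\<xi> i)))"
    by blast
  have "0 \<le> (C + 1) * (\<Sum>i<n. sqnorm (p (\<xi> i))) + Re (compr_form p n X \<xi>)" for \<xi>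
  proof -
    have "- Re (compr_form p n X \<xi>) \<le> C * (\<Sum>i<n. sqnorm (p (\<xi> i)))"
      using abs_Re_le_cmod[of "compr_form p n X \<xi>"] C(2)[of \<xi>] by linarith
    moreover have "0 \<le> (\<Sum>i<n. sqnorm (p (\<xi> i)))" by (simp add: sum_nonneg sqnorm_nonneg)
    ultimately show ?thesis by (simp add: distrib_right)
  qed
  then have "(\<lambda>i j. coset J (unit_shift n (C + 1) X i j)) \<in> Ctilde V p n"
    by (simp add: Ctilde_unit_shift_iff[OF m h])
  moreover have "C + 1 > 0" using C(1) by simp
  ultimately show ?thesis by blast
qed

lemma Ctilde_of_unit_shifts:
  assumes m: "X \<in> matc V op_zero n" and h: "herm adj n X"
    and shifts: "\<And>r. r > 0 \<Longrightarrow> (\<lambda>i j. coset J (unit_shift n r X i j)) \<in> Ctilde V p n"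
  shows "(\<lambda>i j. coset J (X i j)) \<in> Ctilde V p n"
proof -
  have "0 \<le> Re (compr_form p n X \<xi>)" for \<xi>
  proof (rule field_le_epsilon)
    fix e :: real assume e: "e > 0"
    define S where "S = (\<Sum>i<n. sqnorm (p (\<xi> i)))"
    have "S \<ge> 0" by (simp add: S_def sum_nonneg sqnorm_nonneg)
    then have "e / (S + 1) * S \<le> e" using e by (simp add: field_simps)
    moreover have "0 \<le> e / (S + 1) * S + Re (compr_form p n X \<xi>)"
      using shifts[of "e / (S + 1)"] e \<open>S \<ge> 0\<close> by (simp add: Ctilde_unit_shift_iff[OF m h] S_def)
    ultimately show "0 \<le> Re (compr_form p n X \<xi>) + e" by linarith
  qed
  then show ?thesis by (simp add: Ctilde_coset_iff[OF m h] Cp_iff_Re_nonneg[OF m h])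
qed

lemma quot_archimedean_matrix_order_unit:
  "archimedean_matrix_order_unit (quot V J) (qadd J) (qscale J) (coset J op_zero) (qstar J)
     (Ctilde V p) (coset J p)"
  unfolding archimedean_matrix_order_unit_def
proof (intro conjI allI impI ballI)
  show "coset J p \<in> quot V J" by (rule coset_in_quot[OF p_in_V])
  show "qstar J (coset J p) = coset J p" by (simp add: qstar_coset p_in_V adj_p)
next
  fix n :: nat and Xt
  assume "Xt \<in> matc (quot V J) (coset J op_zero) n" "herm (qstar J) n Xt"
  then obtain X where m: "X \<in> matc V op_zero n" and h: "herm adj n X"
    and Xt: "Xt = (\<lambda>i j. coset J (X i j))"
    by (rule quot_herm_lift)
  show "\<exists>r>0. (\<lambda>i j. qadd J (qscale J (complex_of_real r)
      (unit_mat (coset J op_zero) (coset J p) n i j)) (Xt i j)) \<in> Ctilde V p n"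
    unfolding Xt coset_unit_shift[OF m] by (rule Ctilde_exists_unit_shift[OF m h])
next
  fix n :: nat and Xt
  assume Xm: "Xt \<in> matc (quot V J) (coset J op_zero) n" and Xh: "herm (qstar J) n Xt"
    and shifts: "\<forall>r>0. (\<lambda>i j. qadd J (qscale J (complex_of_real r)
      (unit_mat (coset J op_zero) (coset J p) n i j)) (Xt i j)) \<in> Ctilde V p n"
  from Xm Xh obtain X where m: "X \<in> matc V op_zero n" and h: "herm adj n X"
    and Xt: "Xt = (\<lambda>i j. coset J (X i j))"
    by (rule quot_herm_lift)
  show "Xt \<in> Ctilde V p n"
    using shifts unfolding Xt coset_unit_shift[OF m] by (intro Ctilde_of_unit_shifts[OF m h]) blast
qed

lemma quot_operator_system:
  "operator_system (quot V J) (qadd J) (qscale J) (coset J op_zero) (qstar J) (Ctilde V p) (coset J p)"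
  unfolding operator_system_def
  using quot_star_vector_space quot_proper_matrix_ordering quot_archimedean_matrix_order_unit by blast

end

theorem theorem3p6:
  fixes V :: "('h::complex_hilbert \<Rightarrow> 'h) set" and p :: "'h \<Rightarrow> 'h"
  assumes "concrete_opsys V" and "p \<in> V" and "is_projection p"
  shows "operator_system (quot V (Jp V p)) (qadd (Jp V p)) (qscale (Jp V p))
           (coset (Jp V p) op_zero) (qstar (Jp V p)) (Ctilde V p) (coset (Jp V p) p)"
proof -
  interpret opsys_projection V p using assms by unfold_locales
  show ?thesis by (rule quot_operator_system)
qed

end
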